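(* Let $T=M\times_\Phi^q S$ be a tight twisted product semigroup where the commutative monoid $M$ is $\mathcal{D}$-trivial. Then $$E(T)=\{(i,e)\in E(M)\times E(S)\mid i=i+\Phi(e,e)q\}.$$
   Context: $\mathbb{N}=\{0,1,2,\dots\}$. A twisting of a semigroup $S$ is a map $\Phi:S\times S\to\mathbb{N}$ with $\Phi(a,b)+\Phi(ab,c)=\Phi(a,bc)+\Phi(b,c)$ for all $a,b,c\in S$. It is tight if (1) for all $a,b\in S$ there is $a'\in S$ with $ab=a'b$ and $\Phi(a',b)=0$, and (2) for all $a,b\in S$ there is $b'\in S$ with $ab=ab'$ and $\Phi(a,b')=0$. Given a commutative monoid $M$ written additively and $q\in M$, the twisted product semigroup $T=M\times_\Phi^q S$ is the set $M\times S$ with product $(j,a)(k,b)=(j+k+\Phi(a,b)q,\,ab)$, where $\Phi(a,b)q$ is the sum of $\Phi(a,b)$ copies of $q$; $T$ is called tight if $\Phi$ is tight. $E(X)$ denotes the set of idempotents of $X$ (in additive notation, $E(M)=\{i\in M\mid i+i=i\}$). $M$ is $\mathcal{D}$-trivial if all its Green $\mathcal{D}$-classes are singletons. *)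

theory Defs
  imports Main
begin

fun nsum_copies :: "nat \<Rightarrow> 'a::monoid_add \<Rightarrow> 'a" where
  "nsum_copies 0 q = 0"
| "nsum_copies (Suc n) q = q + nsum_copies n q"

definition twisting :: "('b::semigroup_mult \<Rightarrow> 'b \<Rightarrow> nat) \<Rightarrow> bool" where
  "twisting \<Phi> \<longleftrightarrow> (\<forall>a b c. \<Phi> a b + \<Phi> (a * b) c = \<Phi> a (b * c) + \<Phi> b c)"

definition tight_twisting :: "('b::semigroup_mult \<Rightarrow> 'b \<Rightarrow> nat) \<Rightarrow> bool" where
  "tight_twisting \<Phi> \<longleftrightarrow> twisting \<Phi> \<and>
     (\<forall>a b. \<exists>a'. a * b = a' * b \<and> \<Phi> a' b = 0) \<and>
     (\<forall>a b. \<exists>b'. a * b = a * b' \<and> \<Phi> a b' = 0)"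

definition twisted_mult ::
  "('b::semigroup_mult \<Rightarrow> 'b \<Rightarrow> nat) \<Rightarrow> 'a::comm_monoid_add \<Rightarrow> ('a \<times> 'b) \<Rightarrow> ('a \<times> 'b) \<Rightarrow> ('a \<times> 'b)" where
  "twisted_mult \<Phi> q x y = (fst x + fst y + nsum_copies (\<Phi> (snd x) (snd y)) q, snd x * snd y)"

text \<open>Green's relations in a monoid (written additively, S^1 = M).\<close>
definition greenL :: "'a::monoid_add \<Rightarrow> 'a \<Rightarrow> bool" where
  "greenL a b \<longleftrightarrow> (\<exists>x. a = x + b) \<and> (\<exists>y. b = y + a)"

definition greenR :: "'a::monoid_add \<Rightarrow> 'a \<Rightarrow> bool" where
  "greenR a b \<longleftrightarrow> (\<exists>x. a = b + x) \<and> (\<exists>y. b = a + y)"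

definition greenD :: "'a::monoid_add \<Rightarrow> 'a \<Rightarrow> bool" where
  "greenD a b \<longleftrightarrow> (\<exists>c. greenL a c \<and> greenR c b)"

definition D_trivial :: "'a::monoid_add itself \<Rightarrow> bool" where
  "D_trivial _ \<longleftrightarrow> (\<forall>a b::'a. greenD a b \<longrightarrow> a = b)"

definition idem_add :: "'a::monoid_add set" where
  "idem_add = {i. i + i = i}"

definition idem_mult :: "'b::semigroup_mult set" where
  "idem_mult = {e. e * e = e}"

definition twisted_idems ::
  "('b::semigroup_mult \<Rightarrow> 'b \<Rightarrow> nat) \<Rightarrow> 'a::comm_monoid_add \<Rightarrow> ('a \<times> 'b) set" where
  "twisted_idems \<Phi> q = {x. twisted_mult \<Phi> q x x = x}"

end

theory Submission
  imports Defs
begin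

(* (i, e) is idempotent in T iff e e = e and i + i + \<Phi>(e,e) q = i. The latter equation says
   that i and i + i generate the same principal right ideal of M, so i and i + i are R-related;
   D-triviality then forces i + i = i, after which the equation reduces to i = i + \<Phi>(e,e) q. *)

lemma greenL_refl: "greenL a a"
  unfolding greenL_def by (metis add_0)

lemma D_trivial_greenR_eq:
  fixes a b :: "'a::monoid_add"
  assumes "D_trivial TYPE('a)" and "greenR a b"
  shows "a = b"
  using assms greenL_refl unfolding D_trivial_def greenD_def by blast

lemma D_trivial_idem_add_if_absorbs:
  fixes i p :: "'a::monoid_add"
  assumes "D_trivial TYPE('a)" and "i + i + p = i"
  shows "i \<in> idem_add"
proof -
  have "greenR i (i + i)"
    unfolding greenR_def
  proof
    show "\<exists>x. i = i + i + x" using assms(2) by (intro exI[of _ p]) simp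
    show "\<exists>y. i + i = i + y" by blast
  qed
  then have "i = i + i"
    by (rule D_trivial_greenR_eq[OF assms(1)])
  then show ?thesis
    unfolding idem_add_def by simp
qed

lemma twisted_mult_self:
  "twisted_mult \<Phi> q (i, e) (i, e) = (i + i + nsum_copies (\<Phi> e e) q, e * e)"
  by (simp add: twisted_mult_def)

theorem mainTheorem4:
  fixes \<Phi> :: "'b::semigroup_mult \<Rightarrow> 'b \<Rightarrow> nat" and q :: "'a::comm_monoid_add"
  assumes "tight_twisting \<Phi>"
    and "D_trivial TYPE('a)"
  shows "twisted_idems \<Phi> q =
    {(i, e). i \<in> idem_add \<and> e \<in> idem_mult \<and> i = i + nsum_copies (\<Phi> e e) q}"
proof (rule set_eqI)
  fix x :: "'a \<times> 'b"
  obtain i e where x: "x = (i, e)" by (cases x)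
  let ?p = "nsum_copies (\<Phi> e e) q"
  have "x \<in> twisted_idems \<Phi> q \<longleftrightarrow> i + i + ?p = i \<and> e \<in> idem_mult"
    by (simp add: x twisted_idems_def twisted_mult_self idem_mult_def)
  also have "\<dots> \<longleftrightarrow> i \<in> idem_add \<and> e \<in> idem_mult \<and> i = i + ?p"
    using D_trivial_idem_add_if_absorbs[OF assms(2), of i ?p]
    by (auto simp: idem_add_def)
  finally show "x \<in> twisted_idems \<Phi> q \<longleftrightarrow>
      x \<in> {(i, e). i \<in> idem_add \<and> e \<in> idem_mult \<and> i = i + nsum_copies (\<Phi> e e) q}"
    by (simp add: x)
qed

end
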